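(* Let $\mathcal{B}$ be a finite relational structure with domain $B$ and let $b\in B$ be such that the shop $\exists_b$ is a she of $\mathcal{B}$. Let $\varphi(u,v_1,\ldots,v_k)$ be a formula of $\{\exists,\forall,\wedge,\vee\}$-FO. Then for all $x_1,\ldots,x_k\in B$: $\mathcal{B}\models\exists u\,\varphi(u,x_1,\ldots,x_k)$ if and only if $\mathcal{B}\models\varphi(b,x_1,\ldots,x_k)$.
   Context: $\{\exists,\forall,\wedge,\vee\}$-FO is the positive equality-free fragment of first-order logic over the signature of $\mathcal{B}$: formulas built from atomic formulas $R(w_1,\ldots,w_r)$ using only $\wedge,\vee,\exists,\forall$. A shop on $B$ is a map $f:B\to\mathcal{P}(B)\setminus\{\emptyset\}$ such that every $y\in B$ lies in some $f(x)$. A she of $\mathcal{B}$ is a shop $f$ such that for every relation $R$ of $\mathcal{B}$ of arity $i$, if $\mathcal{B}\models R(x_1,\ldots,x_i)$ then $\mathcal{B}\models R(y_1,\ldots,y_i)$ for all $y_j\in f(x_j)$. The shop $\exists_b$ is defined by $\exists_b(x)=\{x,b\}$ for all $x\in B$. *)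

theory Defs
  imports Main
begin

definition rel_structure :: "('r \<Rightarrow> nat) \<Rightarrow> 'a set \<Rightarrow> ('r \<Rightarrow> 'a list set) \<Rightarrow> bool" where
  "rel_structure ar B I \<longleftrightarrow> B \<noteq> {} \<and>
     (\<forall>R. \<forall>t \<in> I R. length t = ar R \<and> set t \<subseteq> B)"

datatype 'r pfo =
    Atom 'r "nat list"
  | Conj "'r pfo" "'r pfo"
  | Disj "'r pfo" "'r pfo"
  | Ex nat "'r pfo"
  | All nat "'r pfo"

fun wf_pfo :: "('r \<Rightarrow> nat) \<Rightarrow> 'r pfo \<Rightarrow> bool" where
  "wf_pfo ar (Atom R ws) = (length ws = ar R)"
| "wf_pfo ar (Conj p q) = (wf_pfo ar p \<and> wf_pfo ar q)"
| "wf_pfo ar (Disj p q) = (wf_pfo ar p \<and> wf_pfo ar q)"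
| "wf_pfo ar (Ex x p) = wf_pfo ar p"
| "wf_pfo ar (All x p) = wf_pfo ar p"

fun fv :: "'r pfo \<Rightarrow> nat set" where
  "fv (Atom R ws) = set ws"
| "fv (Conj p q) = fv p \<union> fv q"
| "fv (Disj p q) = fv p \<union> fv q"
| "fv (Ex x p) = fv p - {x}"
| "fv (All x p) = fv p - {x}"

fun sat :: "'a set \<Rightarrow> ('r \<Rightarrow> 'a list set) \<Rightarrow> (nat \<Rightarrow> 'a) \<Rightarrow> 'r pfo \<Rightarrow> bool" where
  "sat B I e (Atom R ws) = (map e ws \<in> I R)"
| "sat B I e (Conj p q) = (sat B I e p \<and> sat B I e q)"
| "sat B I e (Disj p q) = (sat B I e p \<or> sat B I e q)"
| "sat B I e (Ex x p) = (\<exists>c\<in>B. sat B I (e(x := c)) p)"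
| "sat B I e (All x p) = (\<forall>c\<in>B. sat B I (e(x := c)) p)"

definition shop :: "'a set \<Rightarrow> ('a \<Rightarrow> 'a set) \<Rightarrow> bool" where
  "shop B f \<longleftrightarrow> (\<forall>x\<in>B. f x \<subseteq> B \<and> f x \<noteq> {}) \<and> (\<forall>y\<in>B. \<exists>x\<in>B. y \<in> f x)"

definition she :: "'a set \<Rightarrow> ('r \<Rightarrow> 'a list set) \<Rightarrow> ('a \<Rightarrow> 'a set) \<Rightarrow> bool" where
  "she B I f \<longleftrightarrow> shop B f \<and>
     (\<forall>R. \<forall>xs \<in> I R. \<forall>ys. length ys = length xs \<and> (\<forall>j < length xs. ys ! j \<in> f (xs ! j))
        \<longrightarrow> ys \<in> I R)"

definition exists_shop :: "'a \<Rightarrow> 'a \<Rightarrow> 'a set" where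
  "exists_shop b x = {x, b}"

end

theory Submission
  imports Defs
begin

text \<open>Positive equality-free formulas are preserved by shes: if every variable is moved to
a value in the image of its old value under a she, truth is preserved. For the she
\<open>\<exists>\<^sub>b\<close> the variable \<open>u\<close> may be moved from any witness to \<open>b\<close>, while all other
variables stay where they are.\<close>

lemma sat_she_preserved:
  assumes she: "she B I f"
    and "sat B I e \<phi>" and "\<forall>v. e' v \<in> f (e v)" and "\<forall>v. e v \<in> B"
  shows "sat B I e' \<phi>"
  using assms(2-)
proof (induction \<phi> arbitrary: e e')
  case (Atom R ws)
  have "map e ws \<in> I R" using Atom(1) by simp
  moreover have "\<forall>j < length (map e ws). map e' ws ! j \<in> f (map e ws ! j)"
    using Atom(2) by simp
  ultimately show ?case using she unfolding she_def by auto
next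
  case (Conj p q) thus ?case by auto
next
  case (Disj p q) thus ?case by auto
next
  case (Ex x p)
  then obtain c where c: "c \<in> B" "sat B I (e(x := c)) p" by auto
  from she c(1) obtain c' where c': "c' \<in> f c" "c' \<in> B"
    unfolding she_def shop_def by blast
  have "sat B I (e'(x := c')) p" using Ex c c'(1) by auto
  with c'(2) show ?case by auto
next
  case (All x p)
  show ?case
  proof (simp, intro ballI)
    fix c' assume "c' \<in> B"
    with she obtain c where c: "c \<in> B" "c' \<in> f c" unfolding she_def shop_def by blast
    then show "sat B I (e'(x := c')) p" using All by auto
  qed
qed

lemma sat_exists_shop_move:
  assumes "she B I (exists_shop b)" and "\<forall>v. e v \<in> B"
    and "sat B I e \<phi>" and "\<forall>v. e' v = e v \<or> e' v = b"
  shows "sat B I e' \<phi>"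
  using sat_she_preserved[OF assms(1,3)] assms(2,4) by (simp add: exists_shop_def)

theorem lemma3p2:
  fixes ar :: "'r \<Rightarrow> nat" and B :: "'a set" and I :: "'r \<Rightarrow> 'a list set"
    and b :: 'a and \<phi> :: "'r pfo" and u :: nat and vs :: "nat list"
    and xs :: "'a list" and e :: "nat \<Rightarrow> 'a"
  assumes "rel_structure ar B I" and "finite B"
    and "b \<in> B" and "she B I (exists_shop b)"
    and "wf_pfo ar \<phi>" and "distinct (u # vs)" and "fv \<phi> \<subseteq> insert u (set vs)"
    and "length xs = length vs" and "set xs \<subseteq> B"
    and "\<forall>v. e v \<in> B" and "\<forall>i < length vs. e (vs ! i) = xs ! i"
  shows "(\<exists>c\<in>B. sat B I (e(u := c)) \<phi>) \<longleftrightarrow> sat B I (e(u := b)) \<phi>"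
proof
  assume "\<exists>c\<in>B. sat B I (e(u := c)) \<phi>"
  then obtain c where "c \<in> B" "sat B I (e(u := c)) \<phi>" by auto
  then show "sat B I (e(u := b)) \<phi>"
    using sat_exists_shop_move[OF assms(4), of "e(u := c)"] assms(10) by auto
next
  assume "sat B I (e(u := b)) \<phi>"
  with assms(3) show "\<exists>c\<in>B. sat B I (e(u := c)) \<phi>" by auto
qed

end
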